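(* Let $u:[0,\infty)\to\mathbb R$ be continuous and let $(x_1,x_2)$ be a solution of the age-structured predator–prey system $$\partial_t x_1+\partial_a x_1=-x_1\Big[\mu_1(a)+u(t)+\int_0^A g_1(\alpha)x_2(\alpha,t)d\alpha\Big],\quad \partial_t x_2+\partial_a x_2=-x_2\Big[\mu_2(a)+u(t)+\frac{1}{\int_0^A g_2(\alpha)x_1(\alpha,t)d\alpha}\Big],$$ $x_i(0,t)=\int_0^A k_i(a)x_i(a,t)da$, with $x_i(\cdot,t)\in\mathcal F_i$ for all $t\ge0$ and initial data $x_i(\cdot,0)=x_{i,0}\in\mathcal F_i$. Define $\eta_i(t)=\ln\Pi_i[x_i(\cdot,t)]$. Then there are functions $\psi_i:[-A,\infty)\to(-1,\infty)$ such that $$\psi_i(t-a)=\frac{x_i(a,t)}{x_i^*(a)\,\Pi_i[x_i(\cdot,t)]}-1\quad\text{for all }t\ge0,\ a\in[0,A],$$ so that $x_i(a,t)=x_i^*(a)e^{\eta_i(t)}(1+\psi_i(t-a))$, and $(\eta,\psi)$ satisfy $$\dot\eta_1(t)=\zeta_1-u(t)-e^{\eta_2(t)}\int_0^A g_1(a)x_2^*(a)(1+\psi_2(t-a))\,da,$$ $$\dot\eta_2(t)=\zeta_2-u(t)-\frac{e^{-\eta_1(t)}}{\int_0^A g_2(a)x_1^*(a)(1+\psi_1(t-a))\,da},$$ $$\psi_i(t)=\int_0^A\tilde k_i(a)\psi_i(t-a)\,da\quad(t\ge0),$$ with $\eta_i(0)=\ln\Pi_i[x_{i,0}]$ and $\psi_i(-a)=\frac{x_{i,0}(a)}{x_i^*(a)\Pi_i[x_{i,0}]}-1$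 for $a\in[0,A]$.
   Context: $A>0$; for $i=1,2$, $\mu_i,k_i,g_i:[0,A]\to[0,\infty)$ are (piecewise continuous) with positive integrals over $[0,A]$. $\zeta_i\in\mathbb R$ is the unique real number with $\int_0^A k_i(a)e^{-\int_0^a(\mu_i(s)+\zeta_i)ds}da=1$, and $\tilde k_i(a)=k_i(a)e^{-\int_0^a(\mu_i(s)+\zeta_i)ds}$. $x_i^*(a)=x_i^*(0)e^{-\int_0^a(\zeta_i+\mu_i(s))ds}$ with some constant $x_i^*(0)>0$ (the equilibrium profiles). $\mathcal F_i$ is the set of functions $\xi\in PC^1([0,A];(0,\infty))$ with $\xi(0)=\int_0^A k_i(a)\xi(a)da$, where $PC^1$ denotes continuous functions that are continuously differentiable except at finitely many points where one-sided limits of the derivative exist and are finite. The functionals are $\Pi_i[\xi]=\frac{\int_0^A\pi_{0,i}(a)\xi(a)da}{\int_0^A a\,k_i(a)x_i^*(a)da}$ with $\pi_{0,i}(a)=\int_a^A k_i(s)e^{\int_s^a(\zeta_i+\mu_i(l))dl}ds$. *)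

theory Defs
  imports "HOL-Analysis.Analysis"
begin

definition pc_on :: "real \<Rightarrow> real \<Rightarrow> (real \<Rightarrow> real) \<Rightarrow> bool" where
  "pc_on a b f \<longleftrightarrow> (\<exists>S. finite S \<and> continuous_on ({a..b} - S) f \<and>
      (\<forall>s\<in>S \<inter> {a<..b}. \<exists>l. (f \<longlongrightarrow> l) (at_left s)) \<and>
      (\<forall>s\<in>S \<inter> {a..<b}. \<exists>l. (f \<longlongrightarrow> l) (at_right s)))"

definition pc1_on :: "real \<Rightarrow> real \<Rightarrow> (real \<Rightarrow> real) \<Rightarrow> bool" where
  "pc1_on a b f \<longleftrightarrow> continuous_on {a..b} f \<and> (\<exists>S. finite S \<and>
      (\<forall>x\<in>{a<..<b} - S. f differentiable (at x)) \<and>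
      continuous_on ({a<..<b} - S) (deriv f) \<and>
      (\<forall>s\<in>{a<..b}. s \<in> S \<or> s = b \<longrightarrow> (\<exists>l. (deriv f \<longlongrightarrow> l) (at_left s))) \<and>
      (\<forall>s\<in>{a..<b}. s \<in> S \<or> s = a \<longrightarrow> (\<exists>l. (deriv f \<longlongrightarrow> l) (at_right s))))"

definition Fset :: "real \<Rightarrow> (real \<Rightarrow> real) \<Rightarrow> (real \<Rightarrow> real) set" where
  "Fset A k = {\<xi>. pc1_on 0 A \<xi> \<and> (\<forall>a\<in>{0..A}. \<xi> a > 0) \<and>
                  \<xi> 0 = integral {0..A} (\<lambda>a. k a * \<xi> a)}"

definition xstar :: "(real \<Rightarrow> real) \<Rightarrow> real \<Rightarrow> real \<Rightarrow> real \<Rightarrow> real" where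
  "xstar mu zeta c a = c * exp (- integral {0..a} (\<lambda>s. zeta + mu s))"

definition ktilde :: "(real \<Rightarrow> real) \<Rightarrow> (real \<Rightarrow> real) \<Rightarrow> real \<Rightarrow> real \<Rightarrow> real" where
  "ktilde k mu zeta a = k a * exp (- integral {0..a} (\<lambda>s. mu s + zeta))"

text \<open>pi_0(a) = int_a^A k(s) exp(int_s^a (zeta + mu(l)) dl) ds; note int_s^a = - int_a^s.\<close>
definition pi0 :: "real \<Rightarrow> (real \<Rightarrow> real) \<Rightarrow> (real \<Rightarrow> real) \<Rightarrow> real \<Rightarrow> real \<Rightarrow> real" where
  "pi0 A k mu zeta a = integral {a..A} (\<lambda>s. k s * exp (- integral {a..s} (\<lambda>l. zeta + mu l)))"

definition PiF :: "real \<Rightarrow> (real \<Rightarrow> real) \<Rightarrow> (real \<Rightarrow> real) \<Rightarrow> real \<Rightarrow> real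
                    \<Rightarrow> (real \<Rightarrow> real) \<Rightarrow> real" where
  "PiF A k mu zeta c \<xi> =
     integral {0..A} (\<lambda>a. pi0 A k mu zeta a * \<xi> a) /
     integral {0..A} (\<lambda>a. a * k a * xstar mu zeta c a)"

end

theory Submission
  imports Defs
begin

text \<open>Along a characteristic \<open>t - a = const\<close> the transport equation can be integrated
  explicitly: dividing \<open>x(a,t)\<close> by the survival probability \<open>x\<^sup>*(a)/x\<^sup>*(0)\<close> and by
  \<open>exp (\<zeta> t - \<integral>\<^sub>0\<^sup>t (u + G))\<close>, where \<open>G\<close> is the interaction term, leaves a function
  \<open>B(t - a)\<close> of the birth time alone, and the boundary condition becomes the renewal
  equation \<open>B(t) = \<integral>\<^sub>0\<^sup>A k\<^sup>~(a) B(t - a) da\<close>. Since \<open>\<pi>\<^sub>0(a) x\<^sup>*(a)/x\<^sup>*(0) = K(a) = \<integral>\<^sub>a\<^sup>A k\<^sup>~\<close>,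
  the functional \<open>\<Pi>\<close> applied to the renormalised profile is a multiple of
  \<open>\<integral>\<^sub>0\<^sup>A K(a) B(t - a) da\<close>, which is conserved by the renewal equation because \<open>\<integral> k\<^sup>~ = 1\<close>.
  Hence \<open>ln \<Pi>[x(\<cdot>,t)] = const + \<zeta> t - \<integral>\<^sub>0\<^sup>t (u + G)\<close>, and \<open>\<psi> = B/(c \<Pi>) - 1\<close> inherits the
  renewal equation. Substituting the representation of one species into the interaction term
  of the other yields the coupled equations for \<open>\<eta>\<^sub>1, \<eta>\<^sub>2\<close>.\<close>

section \<open>Piecewise continuous functions\<close>

lemma tendsto_imp_eventually_abs_le:
  fixes f :: "'a \<Rightarrow> real"
  assumes "(f \<longlongrightarrow> l) F"
  shows "\<exists>M. eventually (\<lambda>y. \<bar>f y\<bar> \<le> M) F"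
proof
  show "eventually (\<lambda>y. \<bar>f y\<bar> \<le> \<bar>l\<bar> + 1) F"
    using order_tendstoD(2)[OF tendsto_rabs[OF assms], of "\<bar>l\<bar> + 1"] by (auto elim: eventually_mono)
qed

lemma pc_on_one_sided_limits:
  fixes f :: "real \<Rightarrow> real"
  assumes "pc_on a b f" and x: "x \<in> {a..b}"
  shows "\<exists>l. (f \<longlongrightarrow> l) (at x within {a..<x})" and "\<exists>l. (f \<longlongrightarrow> l) (at x within {x<..b})"
proof -
  obtain S where S: "finite S" "continuous_on ({a..b} - S) f"
    and left: "\<forall>s\<in>S \<inter> {a<..b}. \<exists>l. (f \<longlongrightarrow> l) (at_left s)"
    and right: "\<forall>s\<in>S \<inter> {a..<b}. \<exists>l. (f \<longlongrightarrow> l) (at_right s)"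
    using assms(1) unfolding pc_on_def by blast
  have "(\<exists>l. (f \<longlongrightarrow> l) (at x within {a..<x})) \<and> (\<exists>l. (f \<longlongrightarrow> l) (at x within {x<..b}))"
  proof (cases "x \<in> S")
    case False
    have "eventually (\<lambda>y. \<forall>s\<in>S. y \<noteq> s) (at x)"
      by (rule eventually_ball_finite[OF S(1)]) (simp add: eventually_neq_at_within)
    then have "eventually (\<lambda>y. y \<in> {a..b} - S \<longleftrightarrow> y \<in> {a..b}) (at x)"
      by (rule eventually_mono) auto
    moreover have "(f \<longlongrightarrow> f x) (at x within {a..b} - S)"
      using S(2) x False by (simp add: continuous_on_eq_continuous_within continuous_within)
    ultimately have lim: "(f \<longlongrightarrow> f x) (at x within {a..b})"
      by (blast intro: Lim_transform_within_set)
    have "(f \<longlongrightarrow> f x) (at x within {a..<x})" using lim by (rule tendsto_within_subset) (use x in auto)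
    moreover have "(f \<longlongrightarrow> f x) (at x within {x<..b})" using lim by (rule tendsto_within_subset) (use x in auto)
    ultimately show ?thesis by blast
  next
    case True
    have "\<exists>l. (f \<longlongrightarrow> l) (at x within {a..<x})"
    proof (cases "a < x")
      case True
      with x \<open>x \<in> S\<close> have "x \<in> S \<inter> {a<..b}" by auto
      then obtain l where "(f \<longlongrightarrow> l) (at_left x)" using left by blast
      then have "(f \<longlongrightarrow> l) (at x within {a..<x})" by (rule tendsto_within_subset) auto
      then show ?thesis ..
    qed simp
    moreover have "\<exists>l. (f \<longlongrightarrow> l) (at x within {x<..b})"
    proof (cases "x < b")
      case True
      with x \<open>x \<in> S\<close> have "x \<in> S \<inter> {a..<b}" by auto
      then obtain l where "(f \<longlongrightarrow> l) (at_right x)" using right by blast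
      then have "(f \<longlongrightarrow> l) (at x within {x<..b})" by (rule tendsto_within_subset) auto
      then show ?thesis ..
    qed simp
    ultimately show ?thesis ..
  qed
  then show "\<exists>l. (f \<longlongrightarrow> l) (at x within {a..<x})" "\<exists>l. (f \<longlongrightarrow> l) (at x within {x<..b})"
    by blast+
qed

lemma pc_on_eventually_bounded:
  fixes f :: "real \<Rightarrow> real"
  assumes "pc_on a b f" and x: "x \<in> {a..b}"
  shows "\<exists>M. eventually (\<lambda>y. \<bar>f y\<bar> \<le> M) (at x within {a..b})"
proof -
  obtain M1 where "eventually (\<lambda>y. \<bar>f y\<bar> \<le> M1) (at x within {a..<x})"
    using pc_on_one_sided_limits(1)[OF assms] tendsto_imp_eventually_abs_le by blast
  moreover obtain M2 where "eventually (\<lambda>y. \<bar>f y\<bar> \<le> M2) (at x within {x<..b})"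
    using pc_on_one_sided_limits(2)[OF assms] tendsto_imp_eventually_abs_le by blast
  moreover have "at x within {a..b} = sup (at x within {a..<x}) (at x within {x<..b})"
    unfolding at_within_union[symmetric] by (rule at_within_nhd[of _ UNIV]) (use x in auto)
  ultimately have "eventually (\<lambda>y. \<bar>f y\<bar> \<le> max M1 M2) (at x within {a..b})"
    by (auto simp: eventually_sup elim: eventually_mono)
  then show ?thesis ..
qed

lemma bounded_image_if_eventually_bounded:
  fixes f :: "'a::topological_space \<Rightarrow> real"
  assumes K: "compact K"
    and ev: "\<And>x. x \<in> K \<Longrightarrow> \<exists>M. eventually (\<lambda>y. \<bar>f y\<bar> \<le> M) (at x within K)"
  shows "bounded (f ` K)"
proof -
  have "\<exists>U M. open U \<and> x \<in> U \<and> (\<forall>y\<in>U \<inter> K. \<bar>f y\<bar> \<le> M)" if x: "x \<in> K" for x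
  proof -
    obtain M where "eventually (\<lambda>y. \<bar>f y\<bar> \<le> M) (at x within K)" using ev[OF x] by blast
    then obtain U where "open U" "x \<in> U" "\<forall>y\<in>U. y \<noteq> x \<longrightarrow> y \<in> K \<longrightarrow> \<bar>f y\<bar> \<le> M"
      unfolding eventually_at_topological by blast
    then show ?thesis by (intro exI[of _ U] exI[of _ "max M \<bar>f x\<bar>"]) (use \<open>x \<in> U\<close> in auto)
  qed
  then obtain U M where U: "\<And>x. x \<in> K \<Longrightarrow> open (U x) \<and> x \<in> U x \<and> (\<forall>y\<in>U x \<inter> K. \<bar>f y\<bar> \<le> M x)"
    by metis
  obtain C where C: "C \<subseteq> K" "finite C" "K \<subseteq> (\<Union>c\<in>C. U c)"
    using compactE_image[OF K, of K U] U by blast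
  have "\<bar>f y\<bar> \<le> (\<Sum>c\<in>C. \<bar>M c\<bar>)" if y: "y \<in> K" for y
  proof -
    obtain c where "c \<in> C" "y \<in> U c" using C(3) y by blast
    then have "\<bar>f y\<bar> \<le> \<bar>M c\<bar>" using U[of c] C(1) y by (metis IntI abs_ge_self order_trans subsetD)
    also have "\<dots> \<le> (\<Sum>c\<in>C. \<bar>M c\<bar>)" using \<open>c \<in> C\<close> C(2) by (intro member_le_sum) auto
    finally show ?thesis .
  qed
  then show ?thesis by (intro boundedI) auto
qed

lemma pc_on_bounded:
  fixes f :: "real \<Rightarrow> real"
  assumes "pc_on a b f"
  shows "bounded (f ` {a..b})"
  using pc_on_eventually_bounded[OF assms] by (intro bounded_image_if_eventually_bounded) auto

lemma pc_on_borel_measurable: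
  fixes f :: "real \<Rightarrow> real"
  assumes "pc_on a b f"
  shows "f \<in> borel_measurable (lebesgue_on {a..b})"
proof -
  obtain S where S: "finite S" "continuous_on ({a..b} - S) f"
    using assms unfolding pc_on_def by blast
  have Icc: "{a..b} \<in> sets lebesgue" and "S \<in> sets lebesgue"
    using lebesgue_closedin[of UNIV "{a..b}"] lebesgue_closedin[of UNIV S] finite_imp_closed[OF S(1)] by auto
  then have "{a..b} - S \<in> sets lebesgue" by auto
  then have "f measurable_on ({a..b} - S)"
    using continuous_imp_measurable_on_sets_lebesgue[OF S(2)] measurable_on_iff_borel_measurable by blast
  then have "f measurable_on {a..b}"
    by (rule measurable_on_spike_set) (auto intro: negligible_subset[OF negligible_finite[OF S(1)]])
  then show ?thesis
    using measurable_on_iff_borel_measurable[OF Icc] by blast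
qed

lemma pc_on_absolutely_integrable:
  fixes f :: "real \<Rightarrow> real"
  assumes "pc_on a b f"
  shows "f absolutely_integrable_on {a..b}"
proof -
  have "(\<lambda>x. f x * 1) absolutely_integrable_on {a..b}"
    using pc_on_borel_measurable[OF assms] pc_on_bounded[OF assms]
    by (intro absolutely_integrable_bounded_measurable_product_real) auto
  then show ?thesis by simp
qed

lemma pc_on_isCont:
  fixes f :: "real \<Rightarrow> real"
  assumes "pc_on a b f"
  obtains S where "finite S" "\<And>x. x \<in> {a<..<b} - S \<Longrightarrow> isCont f x"
proof -
  obtain S where S: "finite S" "continuous_on ({a..b} - S) f"
    using assms unfolding pc_on_def by blast
  have "{a<..<b} - S \<subseteq> interior ({a..b} - S)"
    using S(1) by (intro interior_maximal) (auto intro: open_Diff finite_imp_closed)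
  then show thesis
    using continuous_on_interior[OF S(2)] by (intro that[OF S(1)]) blast
qed

lemma absolutely_integrable_mult_continuous:
  fixes g h :: "real \<Rightarrow> real"
  assumes g: "g absolutely_integrable_on {a..b}" and h: "continuous_on {a..b} h"
  shows "(\<lambda>x. g x * h x) absolutely_integrable_on {a..b}"
proof -
  have "(\<lambda>x. h x * g x) absolutely_integrable_on {a..b}"
    by (rule absolutely_integrable_bounded_measurable_product_real[OF _ _ _ g])
      (auto intro: continuous_imp_measurable_on_sets_lebesgue[OF h]
        compact_imp_bounded compact_continuous_image[OF h])
  then show ?thesis by (simp add: mult.commute)
qed

lemma integrable_mult_continuous:
  fixes g h :: "real \<Rightarrow> real"
  assumes "g absolutely_integrable_on {a..b}" and "continuous_on {a..b} h"
  shows "(\<lambda>x. g x * h x) integrable_on {a..b}"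
  using absolutely_integrable_mult_continuous[OF assms] by (rule absolutely_integrable_on_def[THEN iffD1, THEN conjunct1])

lemma continuous_on_slice:
  assumes "continuous_on (S \<times> T) (\<lambda>(s, t). w s t)" and "t \<in> T"
  shows "continuous_on S (\<lambda>s. w s t)"
proof -
  have "continuous_on S (\<lambda>s. (\<lambda>(s, t). w s t) (s, t))"
    by (rule continuous_on_compose2[OF assms(1)]) (use assms(2) in \<open>auto intro!: continuous_intros\<close>)
  then show ?thesis by simp
qed

lemma continuous_on_parametric_integral:
  fixes g :: "real \<Rightarrow> real" and w :: "real \<Rightarrow> real \<Rightarrow> real"
  assumes g: "g absolutely_integrable_on {a..b}"
    and w: "continuous_on ({a..b} \<times> T) (\<lambda>(s, t). w s t)" and T: "closed T"
  shows "continuous_on T (\<lambda>t. integral {a..b} (\<lambda>s. g s * w s t))"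
  unfolding continuous_on_iff
proof (intro ballI allI impI)
  fix t0 e :: real assume t0: "t0 \<in> T" and e: "e > 0"
  define J where "J = integral {a..b} (\<lambda>s. \<bar>g s\<bar>)"
  have abs_g: "(\<lambda>s. \<bar>g s\<bar>) integrable_on {a..b}"
    using g by (simp add: absolutely_integrable_on_def)
  have J: "J \<ge> 0" unfolding J_def using abs_g by (intro integral_nonneg) auto
  define \<epsilon> where "\<epsilon> = e / (J + 1)"
  have \<epsilon>: "\<epsilon> > 0" "J * \<epsilon> < e" using e J by (auto simp: \<epsilon>_def field_simps)
  let ?K = "{a..b} \<times> (T \<inter> cball t0 1)"
  have "uniformly_continuous_on ?K (\<lambda>(s, t). w s t)"
    using T by (intro compact_uniformly_continuous continuous_on_subset[OF w] compact_Times
        closed_Int_compact) auto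
  then obtain d where d: "d > 0" and
    w_close: "\<And>p p'. p \<in> ?K \<Longrightarrow> p' \<in> ?K \<Longrightarrow> dist p' p < d \<Longrightarrow>
      dist ((\<lambda>(s, t). w s t) p') ((\<lambda>(s, t). w s t) p) < \<epsilon>"
    unfolding uniformly_continuous_on_def using \<epsilon>(1) by metis
  note slice = continuous_on_slice[OF w]
  show "\<exists>d>0. \<forall>t\<in>T. dist t t0 < d \<longrightarrow>
      dist (integral {a..b} (\<lambda>s. g s * w s t)) (integral {a..b} (\<lambda>s. g s * w s t0)) < e"
  proof (intro exI[of _ "min d 1"] conjI ballI impI)
    fix t assume t: "t \<in> T" "dist t t0 < min d 1"
    have pointwise: "\<bar>g s * w s t - g s * w s t0\<bar> \<le> \<bar>g s\<bar> * \<epsilon>" if s: "s \<in> {a..b}" for s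
    proof -
      have "dist (w s t) (w s t0) < \<epsilon>"
        using w_close[of "(s, t0)" "(s, t)"] s t t0 by (auto simp: dist_Pair_Pair dist_commute)
      then show ?thesis
        by (simp add: abs_mult right_diff_distrib[symmetric] dist_real_def mult_left_mono)
    qed
    have int_t: "(\<lambda>s. g s * w s t) integrable_on {a..b}"
      by (rule integrable_mult_continuous[OF g slice[OF t(1)]])
    have int_t0: "(\<lambda>s. g s * w s t0) integrable_on {a..b}"
      by (rule integrable_mult_continuous[OF g slice[OF t0]])
    have "dist (integral {a..b} (\<lambda>s. g s * w s t)) (integral {a..b} (\<lambda>s. g s * w s t0))
        = norm (integral {a..b} (\<lambda>s. g s * w s t - g s * w s t0))"
      by (simp add: dist_norm integral_diff[OF int_t int_t0])
    also have "\<dots> \<le> integral {a..b} (\<lambda>s. \<bar>g s\<bar> * \<epsilon>)"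
      using pointwise
      by (intro integral_norm_bound_integral integrable_diff int_t int_t0 integrable_on_mult_left abs_g) auto
    also have "\<dots> = J * \<epsilon>" by (simp add: J_def)
    finally show "dist (integral {a..b} (\<lambda>s. g s * w s t)) (integral {a..b} (\<lambda>s. g s * w s t0)) < e"
      using \<epsilon>(2) by simp
  qed (use d in auto)
qed

lemma integral_pos_if_continuous_nonneg:
  fixes f :: "real \<Rightarrow> real"
  assumes ab: "a < b" and f: "continuous_on {a..b} f" and nonneg: "\<And>x. x \<in> {a..b} \<Longrightarrow> f x \<ge> 0"
    and x0: "x0 \<in> {a..b}" "f x0 > 0"
  shows "integral {a..b} f > 0"
proof -
  have int: "f integrable_on {a..b}" using f by (rule integrable_continuous_interval)
  have "integral {a..b} f \<ge> 0" using int nonneg by (intro integral_nonneg) auto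
  moreover have "integral {a..b} f \<noteq> 0"
  proof
    assume "integral {a..b} f = 0"
    then have "(f has_integral 0) (cbox a b)" using int by (metis has_integral_integral interval_cbox)
    then have "f x0 = 0"
      by (rule has_integral_0_cbox_imp_0[of a b f, rotated 2])
        (use f nonneg x0 ab in \<open>auto simp: cbox_interval box_real\<close>)
    then show False using x0 by simp
  qed
  ultimately show ?thesis by linarith
qed

lemma integral_mult_continuous_pos:
  fixes g h :: "real \<Rightarrow> real"
  assumes g: "g absolutely_integrable_on {a..b}" and g_nonneg: "\<And>x. x \<in> {a..b} \<Longrightarrow> g x \<ge> 0"
    and g_pos: "integral {a..b} g > 0"
    and h: "continuous_on {a..b} h" and h_pos: "\<And>x. x \<in> {a..b} \<Longrightarrow> h x > 0"
  shows "integral {a..b} (\<lambda>x. g x * h x) > 0"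
proof -
  have "{a..b} \<noteq> {}" using g_pos by (cases "a \<le> b") auto
  then obtain x0 where x0: "x0 \<in> {a..b}" "\<And>x. x \<in> {a..b} \<Longrightarrow> h x0 \<le> h x"
    using continuous_attains_inf[OF compact_Icc _ h] by auto
  have g_int: "g integrable_on {a..b}" using g by (simp add: absolutely_integrable_on_def)
  have "integral {a..b} (\<lambda>x. g x * h x0) \<le> integral {a..b} (\<lambda>x. g x * h x)"
    by (rule integral_le[OF integrable_on_mult_left[OF g_int] integrable_mult_continuous[OF g h]])
      (use g_nonneg x0 in \<open>simp add: mult_left_mono\<close>)
  moreover have "integral {a..b} (\<lambda>x. g x * h x0) > 0" using g_pos h_pos[OF x0(1)] by simp
  ultimately show ?thesis by linarith
qed

lemma integral_shifted_sum:
  fixes f g :: "real \<Rightarrow> real"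
  assumes "f integrable_on {a..a + h}" and "g integrable_on {t..t + h}"
  shows "integral {0..h} (\<lambda>s. f (a + s) + g (t + s)) = integral {a..a + h} f + integral {t..t + h} g"
proof -
  have "((\<lambda>s. f (a + s)) has_integral integral {a..a + h} f) {0..h}"
    using has_integral_shift_Icc_real[of f a _ 0 h] assms(1) by (simp add: o_def add.commute integrable_integral)
  moreover have "((\<lambda>s. g (t + s)) has_integral integral {t..t + h} g) {0..h}"
    using has_integral_shift_Icc_real[of g t _ 0 h] assms(2) by (simp add: o_def add.commute integrable_integral)
  ultimately show ?thesis by (intro integral_unique has_integral_add)
qed

lemma has_real_derivative_integral_from_0:
  fixes f :: "real \<Rightarrow> real"
  assumes f: "continuous_on {0..} f" and t: "t \<ge> 0"
  shows "((\<lambda>t. integral {0..t} f) has_real_derivative f t) (at t within {0..})"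
proof -
  have "((\<lambda>t. integral {0..t} f) has_real_derivative f t) (at t within {0..t + 1})"
    by (rule integral_has_real_derivative) (use t in \<open>auto intro: continuous_on_subset[OF f]\<close>)
  moreover have "at t within {0..t + 1} = at t within {0..}"
    by (rule at_within_nhd[of _ "{t - 1<..<t + 1}"]) auto
  ultimately show ?thesis by simp
qed

lemma has_real_derivative_ln_exp_integral:
  fixes w P :: "real \<Rightarrow> real"
  assumes w: "continuous_on {0..} w" and P0: "P0 > 0"
    and P: "\<And>t. 0 \<le> t \<Longrightarrow> P t = exp (zeta * t - integral {0..t} w) * P0" and t: "0 \<le> t"
  shows "((\<lambda>t. ln (P t)) has_real_derivative zeta - w t) (at t within {0..})"
proof (rule has_field_derivative_transform_within[where d = 1])
  show "((\<lambda>t. zeta * t - integral {0..t} w + ln P0) has_real_derivative zeta - w t) (at t within {0..})"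
    using has_real_derivative_integral_from_0[OF w t] by (auto intro!: derivative_eq_intros)
  show "zeta * s - integral {0..s} w + ln P0 = ln (P s)" if "s \<in> {0..}" for s
    using that P0 by (simp add: P ln_mult)
qed (use t in auto)

section \<open>Renewal equations\<close>

lemma continuous_imp_antiderivative:
  fixes B :: "real \<Rightarrow> real"
  assumes B: "continuous_on UNIV B"
  obtains C where "\<And>x. (C has_real_derivative B x) (at x)"
proof
  define C where "C x = integral {0..x} B - integral {x..0} B" for x
  fix x :: real
  define c where "c = min 0 x - 1"
  have c: "c \<le> 0" "c < x" unfolding c_def by auto
  have int: "B integrable_on {u..v}" for u v
    by (rule integrable_continuous_interval) (rule continuous_on_subset[OF B], simp)
  have C_eq: "C y = integral {c..y} B - integral {c..0} B" if "c \<le> y" for y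
  proof (cases "0 \<le> y")
    case True
    then have "integral {y..0} B = 0" by (cases "y = 0") auto
    then show ?thesis
      using Henstock_Kurzweil_Integration.integral_combine[OF c(1) True int] unfolding C_def by simp
  next
    case False
    then show ?thesis
      using Henstock_Kurzweil_Integration.integral_combine[OF that _ int, of 0] False unfolding C_def by simp
  qed
  have "((\<lambda>y. integral {c..y} B - integral {c..0} B) has_real_derivative B x) (at x within {c..x+1})"
    using integral_has_real_derivative[of c "x+1" B x] continuous_on_subset[OF B] c
    by (auto intro: derivative_eq_intros)
  then have "((\<lambda>y. integral {c..y} B - integral {c..0} B) has_real_derivative B x) (at x)"
    using at_within_Icc_at[of c x "x+1"] c by simp
  then show "(C has_real_derivative B x) (at x)"
    by (rule has_field_derivative_transform_within_open[of _ _ _ "{c<..}"]) (use c C_eq in auto)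
qed

lemma linearization_error_le:
  fixes C B :: "real \<Rightarrow> real"
  assumes C: "\<And>z. (C has_real_derivative B z) (at z)"
    and B: "\<And>z. z \<in> closed_segment x y \<Longrightarrow> \<bar>B z - B x\<bar> \<le> e"
  shows "\<bar>C y - C x - (y - x) * B x\<bar> \<le> \<bar>y - x\<bar> * e"
proof -
  have deriv: "(C has_vector_derivative B z) (at z within closed_segment x y)" for z
    using has_field_derivative_at_within[OF C[of z]] unfolding has_real_derivative_iff_has_vector_derivative .
  have "norm (C y - C x - (y - x) *\<^sub>R B x) \<le> norm (y - x) * e"
    by (rule vector_differentiable_bound_linearization[where S="closed_segment x y"]) (use deriv B in auto)
  then show ?thesis by simp
qed

lemma integral_convolution_linearization_le:
  fixes g C B :: "real \<Rightarrow> real"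
  assumes g: "g absolutely_integrable_on {a..b}"
    and C: "\<And>x. (C has_real_derivative B x) (at x)" and B: "continuous_on UNIV B"
    and B_close: "\<And>s z. s \<in> {a..b} \<Longrightarrow> z \<in> closed_segment (p - s) (q - s) \<Longrightarrow> \<bar>B z - B (p - s)\<bar> \<le> \<epsilon>"
  shows "\<bar>integral {a..b} (\<lambda>s. g s * C (q - s)) - integral {a..b} (\<lambda>s. g s * C (p - s))
      - (q - p) * integral {a..b} (\<lambda>s. g s * B (p - s))\<bar> \<le> integral {a..b} (\<lambda>s. \<bar>g s\<bar>) * \<epsilon> * \<bar>q - p\<bar>"
    (is "\<bar>?R q - ?R p - (q - p) * ?D\<bar> \<le> _")
proof -
  have C_cont: "continuous_on UNIV C"
    using C by (intro continuous_at_imp_continuous_on) (auto intro: DERIV_isCont)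
  have int: "(\<lambda>s. g s * h (r - s)) integrable_on {a..b}" if "h = B \<or> h = C" for h r
  proof (rule integrable_mult_continuous[OF g])
    have "continuous_on UNIV h" using that B C_cont by blast
    then show "continuous_on {a..b} (\<lambda>s. h (r - s))"
      by (rule continuous_on_compose2) (auto intro!: continuous_intros)
  qed
  have pointwise: "\<bar>g s * (C (q - s) - C (p - s) - (q - p) * B (p - s))\<bar> \<le> \<bar>g s\<bar> * (\<epsilon> * \<bar>q - p\<bar>)"
    if "s \<in> {a..b}" for s
  proof -
    have "\<bar>C (q - s) - C (p - s) - (q - p) * B (p - s)\<bar> \<le> \<bar>q - p\<bar> * \<epsilon>"
      using linearization_error_le[OF C, of "p - s" "q - s" \<epsilon>] B_close[OF that] by simp
    then show ?thesis by (simp add: abs_mult mult_left_mono mult.commute[of \<epsilon>])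
  qed
  have "((\<lambda>s. g s * C (q - s) - g s * C (p - s) - (q - p) * (g s * B (p - s)))
      has_integral (?R q - ?R p - (q - p) * ?D)) {a..b}"
    by (intro has_integral_diff has_integral_mult_right integrable_integral int) auto
  then have lin: "((\<lambda>s. g s * (C (q - s) - C (p - s) - (q - p) * B (p - s)))
      has_integral (?R q - ?R p - (q - p) * ?D)) {a..b}"
    by (simp add: algebra_simps)
  have "\<bar>?R q - ?R p - (q - p) * ?D\<bar>
      = norm (integral {a..b} (\<lambda>s. g s * (C (q - s) - C (p - s) - (q - p) * B (p - s))))"
    using lin by (simp add: integral_unique)
  also have "\<dots> \<le> integral {a..b} (\<lambda>s. \<bar>g s\<bar> * (\<epsilon> * \<bar>q - p\<bar>))"
    using pointwise lin g
    by (intro integral_norm_bound_integral) (auto simp: absolutely_integrable_on_def intro: integrable_on_mult_left)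
  finally show ?thesis by (simp add: mult.assoc)
qed

lemma has_real_derivative_convolution:
  fixes g C B :: "real \<Rightarrow> real"
  assumes g: "g absolutely_integrable_on {a..b}"
    and C: "\<And>x. (C has_real_derivative B x) (at x)"
    and B: "continuous_on UNIV B"
  shows "((\<lambda>q. integral {a..b} (\<lambda>s. g s * C (q - s))) has_real_derivative
           integral {a..b} (\<lambda>s. g s * B (p - s))) (at p)"
proof -
  define J where "J = integral {a..b} (\<lambda>s. \<bar>g s\<bar>)"
  have J: "J \<ge> 0" unfolding J_def using g by (intro integral_nonneg) (auto simp: absolutely_integrable_on_def)
  have "\<exists>d>0. \<forall>q. \<bar>q - p\<bar> < d \<longrightarrow>
      \<bar>integral {a..b} (\<lambda>s. g s * C (q - s)) - integral {a..b} (\<lambda>s. g s * C (p - s))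
        - (q - p) * integral {a..b} (\<lambda>s. g s * B (p - s))\<bar> \<le> e * \<bar>q - p\<bar>" if e: "e > 0" for e
  proof -
    define \<epsilon> where "\<epsilon> = e / (J + 1)"
    have \<epsilon>: "\<epsilon> > 0" "J * \<epsilon> \<le> e" using e J by (auto simp: \<epsilon>_def field_simps)
    have "uniformly_continuous_on {p - b - 1..p - a + 1} B"
      by (intro compact_uniformly_continuous continuous_on_subset[OF B]) auto
    then obtain \<delta> where \<delta>: "\<delta> > 0" and
      B_close: "\<And>x x'. x \<in> {p - b - 1..p - a + 1} \<Longrightarrow> x' \<in> {p - b - 1..p - a + 1} \<Longrightarrow>
        dist x' x < \<delta> \<Longrightarrow> dist (B x') (B x) < \<epsilon>"
      unfolding uniformly_continuous_on_def using \<epsilon>(1) by metis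
    show ?thesis
    proof (intro exI[of _ "min \<delta> 1"] conjI allI impI)
      fix q assume q: "\<bar>q - p\<bar> < min \<delta> 1"
      have "\<bar>B z - B (p - s)\<bar> \<le> \<epsilon>" if s: "s \<in> {a..b}" and z: "z \<in> closed_segment (p - s) (q - s)" for s z
      proof -
        have "\<bar>z - (p - s)\<bar> \<le> \<bar>q - p\<bar>" "z \<in> {p - b - 1..p - a + 1}"
          using z s q by (auto simp: closed_segment_eq_real_ivl split: if_splits)
        then show ?thesis
          using B_close[of "p - s" z] s q by (auto simp: dist_real_def)
      qed
      then have "\<bar>integral {a..b} (\<lambda>s. g s * C (q - s)) - integral {a..b} (\<lambda>s. g s * C (p - s))
          - (q - p) * integral {a..b} (\<lambda>s. g s * B (p - s))\<bar> \<le> J * \<epsilon> * \<bar>q - p\<bar>"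
        unfolding J_def by (rule integral_convolution_linearization_le[OF g C B])
      also have "\<dots> \<le> e * \<bar>q - p\<bar>" using \<epsilon>(2) by (intro mult_right_mono) auto
      finally show "\<bar>integral {a..b} (\<lambda>s. g s * C (q - s)) - integral {a..b} (\<lambda>s. g s * C (p - s))
          - (q - p) * integral {a..b} (\<lambda>s. g s * B (p - s))\<bar> \<le> e * \<bar>q - p\<bar>" .
    qed (use \<delta> in auto)
  qed
  then show ?thesis
    unfolding has_field_derivative_def has_derivative_at_alt
    by (simp add: bounded_linear_mult_right mult.commute)
qed

lemma has_real_derivative_tail_integral:
  fixes k :: "real \<Rightarrow> real"
  assumes k: "k integrable_on {a..b}" and x: "x \<in> {a<..<b}" and cont: "isCont k x"
  shows "((\<lambda>y. integral {y..b} k) has_real_derivative - k x) (at x)"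
proof -
  have "((\<lambda>y. integral {a..y} k) has_vector_derivative k x) (at x within {a..b} - {})"
    using x cont by (intro integral_has_vector_derivative_continuous_at[OF k])
      (auto intro: continuous_at_imp_continuous_within)
  then have "((\<lambda>y. integral {a..y} k) has_real_derivative k x) (at x)"
    using x at_within_Icc_at[of a x b] by (simp add: has_real_derivative_iff_has_vector_derivative)
  then have "((\<lambda>y. integral {a..b} k - integral {a..y} k) has_real_derivative 0 - k x) (at x)"
    by (rule DERIV_diff[OF DERIV_const])
  then have "((\<lambda>y. integral {a..b} k - integral {a..y} k) has_real_derivative - k x) (at x)"
    by simp
  then show ?thesis
  proof (rule has_field_derivative_transform_within_open[of _ _ _ "{a<..<b}"])
    show "integral {a..b} k - integral {a..y} k = integral {y..b} k" if "y \<in> {a<..<b}" for y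
      using Henstock_Kurzweil_Integration.integral_combine[OF _ _ k, of y] that by simp
  qed (use x in auto)
qed

lemma has_integral_mult_tail_integral:
  fixes k f f' :: "real \<Rightarrow> real"
  assumes ab: "a \<le> b" and S: "finite S"
    and k: "k integrable_on {a..b}" and k_cont: "\<And>x. x \<in> {a<..<b} - S \<Longrightarrow> isCont k x"
    and f: "continuous_on {a..b} f" and f': "\<And>x. x \<in> {a<..<b} - S \<Longrightarrow> (f has_real_derivative f' x) (at x)"
    and fk: "(\<lambda>x. f x * k x) integrable_on {a..b}"
  shows "((\<lambda>x. f' x * integral {x..b} k) has_integral
           integral {a..b} (\<lambda>x. f x * k x) - f a * integral {a..b} k) {a..b}"
proof (rule integration_by_parts_interior_strong[OF bounded_bilinear_mult S ab f])
  show "continuous_on {a..b} (\<lambda>x. integral {x..b} k)"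
    by (rule indefinite_integral_continuous_1'[OF k])
  show "(f has_vector_derivative f' x) (at x)" if "x \<in> {a<..<b} - S" for x
    using f'[OF that] by (simp add: has_real_derivative_iff_has_vector_derivative)
  show "((\<lambda>y. integral {y..b} k) has_vector_derivative - k x) (at x)" if "x \<in> {a<..<b} - S" for x
    using has_real_derivative_tail_integral[OF k _ k_cont[OF that]] that
    by (simp add: has_real_derivative_iff_has_vector_derivative)
  have "((\<lambda>x. - (f x * k x)) has_integral - integral {a..b} (\<lambda>x. f x * k x)) {a..b}"
    using fk by (intro has_integral_neg integrable_integral)
  then show "((\<lambda>x. f x * - k x) has_integral f b * integral {b..b} k - f a * integral {a..b} k -
      (integral {a..b} (\<lambda>x. f x * k x) - f a * integral {a..b} k)) {a..b}"
    by simp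
qed

lemma integral_tail_integral_eq_first_moment:
  fixes k :: "real \<Rightarrow> real"
  assumes A: "0 \<le> A" and k: "k absolutely_integrable_on {0..A}"
    and S: "finite S" and k_cont: "\<And>x. x \<in> {0<..<A} - S \<Longrightarrow> isCont k x"
  shows "integral {0..A} (\<lambda>a. integral {a..A} k) = integral {0..A} (\<lambda>a. a * k a)"
proof -
  have "(\<lambda>a. k a * a) integrable_on {0..A}"
    by (rule integrable_mult_continuous[OF k]) (intro continuous_intros)
  then have "(\<lambda>a. a * k a) integrable_on {0..A}" by (simp add: mult.commute)
  moreover have "k integrable_on {0..A}" using k by (simp add: absolutely_integrable_on_def)
  ultimately have "((\<lambda>a. 1 * integral {a..A} k) has_integral
      integral {0..A} (\<lambda>a. a * k a) - 0 * integral {0..A} k) {0..A}"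
    by (intro has_integral_mult_tail_integral[OF A S _ k_cont]) (auto intro!: continuous_intros derivative_eq_intros)
  then show ?thesis by (simp add: integral_unique)
qed

lemma integral_tail_convolution_eq:
  fixes k B C :: "real \<Rightarrow> real"
  assumes A: "0 \<le> A" and k: "k absolutely_integrable_on {0..A}"
    and S: "finite S" and k_cont: "\<And>x. x \<in> {0<..<A} - S \<Longrightarrow> isCont k x"
    and C: "\<And>x. (C has_real_derivative B x) (at x)"
  shows "integral {0..A} (\<lambda>a. integral {a..A} k * B (p - a))
    = C p * integral {0..A} k - integral {0..A} (\<lambda>a. k a * C (p - a))"
proof -
  have k_int: "k integrable_on {0..A}" using k by (simp add: absolutely_integrable_on_def)
  have "continuous_on UNIV C"
    using C by (intro continuous_at_imp_continuous_on) (auto intro: DERIV_isCont)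
  then have Cp_cont: "continuous_on {0..A} (\<lambda>a. C (p - a))"
    by (rule continuous_on_compose2) (auto intro!: continuous_intros)
  have "((\<lambda>a. p - a) has_real_derivative -1) (at a)" for a
    by (auto intro!: derivative_eq_intros)
  then have Cp_deriv: "((\<lambda>a. C (p - a)) has_real_derivative - B (p - a)) (at a)" for a
    using DERIV_chain2[OF C] by fastforce
  have "(\<lambda>a. k a * C (p - a)) integrable_on {0..A}"
    by (rule integrable_mult_continuous[OF k Cp_cont])
  then have Ck_int: "(\<lambda>a. C (p - a) * k a) integrable_on {0..A}" by (simp add: mult.commute)
  have "((\<lambda>a. - B (p - a) * integral {a..A} k) has_integral
      integral {0..A} (\<lambda>a. C (p - a) * k a) - C (p - 0) * integral {0..A} k) {0..A}"
    by (rule has_integral_mult_tail_integral[OF A S k_int k_cont Cp_cont Cp_deriv Ck_int])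
  then have "((\<lambda>a. - (- B (p - a) * integral {a..A} k)) has_integral
      - (integral {0..A} (\<lambda>a. k a * C (p - a)) - C p * integral {0..A} k)) {0..A}"
    by (intro has_integral_neg) (simp add: mult.commute)
  then show ?thesis by (simp add: mult.commute integral_unique)
qed

lemma renewal_tail_convolution_constant:
  fixes k B :: "real \<Rightarrow> real"
  assumes A: "0 \<le> A" and k: "k absolutely_integrable_on {0..A}" and k1: "integral {0..A} k = 1"
    and S: "finite S" and k_cont: "\<And>x. x \<in> {0<..<A} - S \<Longrightarrow> isCont k x"
    and B: "continuous_on UNIV B"
    and renewal: "\<And>t. t \<ge> 0 \<Longrightarrow> B t = integral {0..A} (\<lambda>a. k a * B (t - a))"
    and t: "t \<ge> 0"
  shows "integral {0..A} (\<lambda>a. integral {a..A} k * B (t - a)) = integral {0..A} (\<lambda>a. integral {a..A} k * B (- a))"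
proof -
  obtain C where C: "\<And>x. (C has_real_derivative B x) (at x)"
    using continuous_imp_antiderivative[OF B] by blast
  define R where "R p = integral {0..A} (\<lambda>a. k a * C (p - a))" for p
  have tail_conv: "integral {0..A} (\<lambda>a. integral {a..A} k * B (p - a)) = C p - R p" for p
    using integral_tail_convolution_eq[OF A k S k_cont C] k1 by (simp add: R_def)
  have deriv0: "((\<lambda>p. C p - R p) has_real_derivative 0) (at p within {0..})" if p: "p \<in> {0..}" for p
  proof -
    have "((\<lambda>p. C p - R p) has_real_derivative B p - integral {0..A} (\<lambda>a. k a * B (p - a))) (at p)"
      unfolding R_def by (intro DERIV_diff C has_real_derivative_convolution[OF k C B])
    then show ?thesis using renewal[of p] p by (simp add: has_field_derivative_at_within)
  qed
  have "\<exists>c. \<forall>p\<in>{0..}. C p - R p = c"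
    by (rule has_field_derivative_zero_constant[OF convex_real_interval(1) deriv0])
  then obtain c where "\<forall>p\<in>{0..}. C p - R p = c" ..
  then show ?thesis using t tail_conv[of t] tail_conv[of 0] by simp
qed

section \<open>Solutions along characteristics\<close>

definition survival :: "(real \<Rightarrow> real) \<Rightarrow> real \<Rightarrow> real \<Rightarrow> real" where
  "survival mu zeta a = exp (- integral {0..a} (\<lambda>s. mu s + zeta))"

lemma xstar_eq_survival: "xstar mu zeta c a = c * survival mu zeta a"
  by (simp add: xstar_def survival_def add.commute)

lemma ktilde_eq_survival: "ktilde k mu zeta a = k a * survival mu zeta a"
  by (simp add: ktilde_def survival_def)

lemma survival_pos: "survival mu zeta a > 0"
  by (simp add: survival_def)

lemma xstar_pos: "c > 0 \<Longrightarrow> xstar mu zeta c a > 0"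
  by (simp add: xstar_eq_survival survival_pos)

lemma survival_0: "survival mu zeta 0 = 1"
  by (simp add: survival_def)

lemma survival_split:
  assumes mu: "mu integrable_on {0..A}" and as: "0 \<le> a" "a \<le> s" "s \<le> A"
  shows "survival mu zeta s = survival mu zeta a * exp (- integral {a..s} (\<lambda>l. mu l + zeta))"
proof -
  have "(\<lambda>l. mu l + zeta) integrable_on {0..s}"
    using as by (intro integrable_add integrable_on_subinterval[OF mu]) auto
  then have "integral {0..s} (\<lambda>l. mu l + zeta) = integral {0..a} (\<lambda>l. mu l + zeta) + integral {a..s} (\<lambda>l. mu l + zeta)"
    using as by (simp add: Henstock_Kurzweil_Integration.integral_combine)
  then show ?thesis by (simp add: survival_def exp_add[symmetric])
qed

lemma continuous_on_survival:
  assumes "mu integrable_on {0..A}"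
  shows "continuous_on {0..A} (survival mu zeta)"
  unfolding survival_def using assms
  by (intro continuous_intros indefinite_integral_continuous_1 integrable_add) auto

lemma absolutely_integrable_ktilde:
  assumes k: "pc_on 0 A k" and mu: "mu integrable_on {0..A}"
  shows "ktilde k mu zeta absolutely_integrable_on {0..A}"
  using absolutely_integrable_mult_continuous[OF pc_on_absolutely_integrable[OF k] continuous_on_survival[OF mu]]
  by (simp add: ktilde_eq_survival[abs_def])

lemma ktilde_isCont:
  assumes k: "pc_on 0 A k" and mu: "mu integrable_on {0..A}"
  obtains S where "finite S" "\<And>x. x \<in> {0<..<A} - S \<Longrightarrow> isCont (ktilde k mu zeta) x"
proof -
  obtain S where S: "finite S" "\<And>x. x \<in> {0<..<A} - S \<Longrightarrow> isCont k x"
    using pc_on_isCont[OF k] by blast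
  have "isCont (survival mu zeta) x" if "x \<in> {0<..<A}" for x
    using continuous_on_interior[OF continuous_on_survival[OF mu]] that by simp
  then show thesis
    using S by (intro that[OF S(1)]) (auto simp: ktilde_eq_survival[abs_def] intro: continuous_intros)
qed

lemma pi0_mult_survival:
  assumes mu: "mu integrable_on {0..A}" and a: "a \<in> {0..A}"
  shows "pi0 A k mu zeta a * survival mu zeta a = integral {a..A} (ktilde k mu zeta)"
proof -
  have "k s * exp (- integral {a..s} (\<lambda>l. zeta + mu l)) * survival mu zeta a = ktilde k mu zeta s"
    if "s \<in> {a..A}" for s
    using survival_split[OF mu, of a s zeta] a that by (simp add: ktilde_eq_survival add.commute)
  then show ?thesis
    unfolding pi0_def integral_mult_left[symmetric] by (intro integral_cong) auto
qed

text \<open>The value carried by the cohort born at time \<open>s\<close>: for \<open>s \<ge> 0\<close> it is read off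
  at age 0, for \<open>s \<in> [-A, 0]\<close> at time 0; for \<open>s < -A\<close> the value of the oldest age is
  repeated, which makes the function continuous on all of \<open>\<real>\<close>.\<close>

definition cohort :: "real \<Rightarrow> (real \<Rightarrow> real \<Rightarrow> real) \<Rightarrow> real \<Rightarrow> real" where
  "cohort A z s = z (min A (max 0 (- s))) (max 0 s)"

lemma cohort_eq:
  assumes inv: "\<And>a t h. 0 \<le> a \<Longrightarrow> 0 \<le> t \<Longrightarrow> 0 \<le> h \<Longrightarrow> a + h \<le> A \<Longrightarrow> z (a + h) (t + h) = z a t"
    and a: "a \<in> {0..A}" and t: "0 \<le> t"
  shows "z a t = cohort A z (t - a)"
proof (cases "a \<le> t")
  case True
  then have "z (0 + a) (t - a + a) = z 0 (t - a)" using a by (intro inv) auto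
  then show ?thesis using True a by (simp add: cohort_def)
next
  case False
  then have "z (a - t + t) (0 + t) = z (a - t) 0" using a t by (intro inv) auto
  then show ?thesis using False a t by (simp add: cohort_def)
qed

lemma continuous_on_cohort:
  assumes A: "0 \<le> A" and z: "continuous_on ({0..A} \<times> {0..}) (\<lambda>(a, t). z a t)"
  shows "continuous_on UNIV (cohort A z)"
proof -
  have "continuous_on UNIV ((\<lambda>(a, t). z a t) \<circ> (\<lambda>s. (min A (max 0 (- s)), max 0 s)))"
    by (rule continuous_on_compose[OF _ continuous_on_subset[OF z]]) (use A in \<open>auto intro!: continuous_intros\<close>)
  then show ?thesis by (simp add: cohort_def o_def)
qed

lemma transport_renormalised_invariant:
  fixes mu w :: "real \<Rightarrow> real" and x :: "real \<Rightarrow> real \<Rightarrow> real"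
  assumes mu: "mu integrable_on {0..A}" and w: "continuous_on {0..} w"
    and char: "\<And>a t h. 0 \<le> a \<Longrightarrow> 0 \<le> t \<Longrightarrow> 0 \<le> h \<Longrightarrow> a + h \<le> A \<Longrightarrow>
        x (a + h) (t + h) = x a t * exp (- integral {0..h} (\<lambda>s. mu (a + s) + w (t + s)))"
    and h: "0 \<le> a" "0 \<le> t" "0 \<le> h" "a + h \<le> A"
  shows "x (a + h) (t + h) / (survival mu zeta (a + h) * exp (zeta * (t + h) - integral {0..t + h} w))
    = x a t / (survival mu zeta a * exp (zeta * t - integral {0..t} w))"
proof -
  define F where "F t = integral {0..t} w" for t
  define I where "I = integral {a..a + h} mu"
  have w_int: "w integrable_on {u..v}" if "0 \<le> u" for u v
    by (rule integrable_continuous_interval) (use that in \<open>auto intro: continuous_on_subset[OF w]\<close>)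
  have "integral {t..t + h} w = F (t + h) - F t"
    using Henstock_Kurzweil_Integration.integral_combine[of 0 t "t + h" w] w_int[of 0] h
    unfolding F_def by simp
  moreover have "integral {0..h} (\<lambda>s. mu (a + s) + w (t + s)) = I + integral {t..t + h} w"
    unfolding I_def using h by (intro integral_shifted_sum integrable_on_subinterval[OF mu] w_int) auto
  ultimately have char_int: "integral {0..h} (\<lambda>s. mu (a + s) + w (t + s)) = I + (F (t + h) - F t)"
    by simp
  have "integral {a..a + h} (\<lambda>l. mu l + zeta) = I + zeta * h"
    unfolding I_def using h by (subst integral_add) (auto intro: integrable_on_subinterval[OF mu])
  then have surv: "survival mu zeta (a + h) = survival mu zeta a * exp (- (I + zeta * h))"
    using survival_split[OF mu, of a "a + h" zeta] h by simp
  have "exp (- (I + zeta * h)) * exp (zeta * (t + h) - F (t + h))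
      = exp (- (I + (F (t + h) - F t))) * exp (zeta * t - F t)"
    by (simp add: mult_exp_exp algebra_simps)
  then show ?thesis
    unfolding F_def[symmetric] char[OF h] char_int surv by (simp add: mult.assoc)
qed

lemma transport_solution_cohort_form:
  fixes mu w :: "real \<Rightarrow> real" and x :: "real \<Rightarrow> real \<Rightarrow> real"
  assumes A: "0 \<le> A" and mu: "mu integrable_on {0..A}" and w: "continuous_on {0..} w"
    and x_cont: "continuous_on ({0..A} \<times> {0..}) (\<lambda>(a, t). x a t)"
    and x_pos: "\<And>a t. a \<in> {0..A} \<Longrightarrow> 0 \<le> t \<Longrightarrow> x a t > 0"
    and char: "\<And>a t h. 0 \<le> a \<Longrightarrow> 0 \<le> t \<Longrightarrow> 0 \<le> h \<Longrightarrow> a + h \<le> A \<Longrightarrow>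
        x (a + h) (t + h) = x a t * exp (- integral {0..h} (\<lambda>s. mu (a + s) + w (t + s)))"
  obtains B where "continuous_on UNIV B" "\<And>s. B s > 0"
    "\<And>a t. a \<in> {0..A} \<Longrightarrow> 0 \<le> t \<Longrightarrow>
       x a t = B (t - a) * survival mu zeta a * exp (zeta * t - integral {0..t} w)"
proof -
  define F where "F t = integral {0..t} w" for t
  define z where "z a t = x a t / (survival mu zeta a * exp (zeta * t - F t))" for a t
  have z_inv: "z (a + h) (t + h) = z a t" if "0 \<le> a" "0 \<le> t" "0 \<le> h" "a + h \<le> A" for a t h
    unfolding z_def F_def by (rule transport_renormalised_invariant[OF mu w char that])
  have F_cont: "continuous_on {0..} F"
    unfolding continuous_on_eq_continuous_within F_def
    using has_real_derivative_integral_from_0[OF w] by (auto intro: DERIV_continuous)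
  have z_cont: "continuous_on ({0..A} \<times> {0..}) (\<lambda>(a, t). z a t)"
  proof -
    have "continuous_on ({0..A} \<times> {0..}) (\<lambda>p. F (snd p))"
      by (rule continuous_on_compose2[OF F_cont]) (auto intro!: continuous_intros)
    moreover have "continuous_on ({0..A} \<times> {0..}) (\<lambda>p. survival mu zeta (fst p))"
      by (rule continuous_on_compose2[OF continuous_on_survival[OF mu]]) (auto intro!: continuous_intros)
    ultimately have "continuous_on ({0..A} \<times> {0..})
        (\<lambda>p. x (fst p) (snd p) / (survival mu zeta (fst p) * exp (zeta * snd p - F (snd p))))"
      using x_cont survival_pos
      by (intro continuous_intros) (auto simp: case_prod_beta' less_imp_neq[symmetric])
    then show ?thesis by (simp add: z_def case_prod_beta')
  qed
  show ?thesis
  proof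
    show "continuous_on UNIV (cohort A z)" by (rule continuous_on_cohort[OF A z_cont])
    show "cohort A z s > 0" for s
      using A x_pos survival_pos by (simp add: cohort_def z_def)
    show "x a t = cohort A z (t - a) * survival mu zeta a * exp (zeta * t - integral {0..t} w)"
      if "a \<in> {0..A}" "0 \<le> t" for a t
      using cohort_eq[of A z, OF z_inv that] survival_pos[of mu zeta a] by (simp add: z_def F_def field_simps)
  qed
qed

lemma PiF_cong:
  assumes "\<And>a. a \<in> {0..A} \<Longrightarrow> f a = g a"
  shows "PiF A k mu zeta c f = PiF A k mu zeta c g"
  unfolding PiF_def using assms by (metis (no_types, lifting) integral_cong)

lemma PiF_scale: "PiF A k mu zeta c (\<lambda>a. r * f a) = r * PiF A k mu zeta c f"
  by (simp add: PiF_def mult.left_commute)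

lemma PiF_survival_profile:
  assumes A: "0 \<le> A" and mu: "mu integrable_on {0..A}" and k: "pc_on 0 A k"
  shows "PiF A k mu zeta c (\<lambda>a. survival mu zeta a * \<phi> a) =
    integral {0..A} (\<lambda>a. integral {a..A} (ktilde k mu zeta) * \<phi> a)
      / (c * integral {0..A} (\<lambda>a. integral {a..A} (ktilde k mu zeta)))"
proof -
  obtain S where S: "finite S" "\<And>x. x \<in> {0<..<A} - S \<Longrightarrow> isCont (ktilde k mu zeta) x"
    using ktilde_isCont[OF k mu] by blast
  have "integral {0..A} (\<lambda>a. pi0 A k mu zeta a * (survival mu zeta a * \<phi> a))
      = integral {0..A} (\<lambda>a. integral {a..A} (ktilde k mu zeta) * \<phi> a)"
    using pi0_mult_survival[OF mu] by (intro integral_cong) (simp add: mult.assoc[symmetric])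
  moreover have "integral {0..A} (\<lambda>a. a * k a * xstar mu zeta c a)
      = c * integral {0..A} (\<lambda>a. integral {a..A} (ktilde k mu zeta))"
  proof -
    have "(\<lambda>a. a * k a * xstar mu zeta c a) = (\<lambda>a. c * (a * ktilde k mu zeta a))"
      by (simp add: fun_eq_iff xstar_eq_survival ktilde_eq_survival mult_ac)
    then show ?thesis
      using integral_tail_integral_eq_first_moment[OF A absolutely_integrable_ktilde[OF k mu] S] by simp
  qed
  ultimately show ?thesis by (simp add: PiF_def)
qed

lemma PiF_renewal_invariant:
  assumes A: "0 < A" and mu: "mu integrable_on {0..A}" and k: "pc_on 0 A k"
    and k_nonneg: "\<And>a. a \<in> {0..A} \<Longrightarrow> k a \<ge> 0"
    and k1: "integral {0..A} (ktilde k mu zeta) = 1" and c: "c > 0"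
    and B: "continuous_on UNIV B" and B_pos: "\<And>s. B s > 0"
    and renewal: "\<And>t. t \<ge> 0 \<Longrightarrow> B t = integral {0..A} (\<lambda>a. ktilde k mu zeta a * B (t - a))"
  obtains Pi0 where "Pi0 > 0"
    "\<And>t. t \<ge> 0 \<Longrightarrow> PiF A k mu zeta c (\<lambda>a. survival mu zeta a * B (t - a)) = Pi0"
proof -
  let ?kt = "ktilde k mu zeta"
  define K where "K a = integral {a..A} ?kt" for a
  have kt: "?kt absolutely_integrable_on {0..A}" by (rule absolutely_integrable_ktilde[OF k mu])
  then have kt_int: "?kt integrable_on {0..A}" by (simp add: absolutely_integrable_on_def)
  obtain S where S: "finite S" "\<And>x. x \<in> {0<..<A} - S \<Longrightarrow> isCont ?kt x"
    using ktilde_isCont[OF k mu] by blast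
  have K_cont: "continuous_on {0..A} K"
    unfolding K_def by (rule indefinite_integral_continuous_1'[OF kt_int])
  have K_nonneg: "K a \<ge> 0" if "a \<in> {0..A}" for a
    unfolding K_def using that k_nonneg survival_pos[of mu zeta]
    by (intro integral_nonneg integrable_on_subinterval[OF kt_int])
      (auto simp: ktilde_eq_survival intro!: mult_nonneg_nonneg less_imp_le[OF survival_pos])
  have K0: "K 0 = 1" using k1 by (simp add: K_def)
  have B_shift: "continuous_on {0..A} (\<lambda>a. B (t - a))" for t
    by (rule continuous_on_compose2[OF B]) (auto intro!: continuous_intros)
  define Pi0 where "Pi0 = integral {0..A} (\<lambda>a. K a * B (- a)) / (c * integral {0..A} K)"
  show thesis
  proof
    have "integral {0..A} K > 0"
      using A K_cont K_nonneg K0 by (intro integral_pos_if_continuous_nonneg[of 0 A K 0]) auto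
    moreover have "integral {0..A} (\<lambda>a. K a * B (- a)) > 0"
      using A K_nonneg K0 B_pos B_shift[of 0]
      by (intro integral_pos_if_continuous_nonneg[of 0 A _ 0] continuous_on_mult K_cont)
        (auto simp: less_imp_le)
    ultimately show "Pi0 > 0" using c by (simp add: Pi0_def)
    show "PiF A k mu zeta c (\<lambda>a. survival mu zeta a * B (t - a)) = Pi0" if "t \<ge> 0" for t
      using renewal_tail_convolution_constant[OF less_imp_le[OF A] kt k1 S B renewal that]
      unfolding PiF_survival_profile[OF less_imp_le[OF A] mu k] Pi0_def K_def by simp
  qed
qed

lemma cohort_birth_renewal:
  fixes k B E :: "real \<Rightarrow> real" and x :: "real \<Rightarrow> real \<Rightarrow> real"
  assumes A: "0 \<le> A" and t: "0 \<le> t" and E: "E t \<noteq> 0"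
    and x_eq: "\<And>a. a \<in> {0..A} \<Longrightarrow> x a t = B (t - a) * survival mu zeta a * E t"
    and birth: "x 0 t = integral {0..A} (\<lambda>a. k a * x a t)"
  shows "B t = integral {0..A} (\<lambda>a. ktilde k mu zeta a * B (t - a))"
proof -
  have "B t * E t = x 0 t" using x_eq[of 0] A by (simp add: survival_0)
  also have "\<dots> = integral {0..A} (\<lambda>a. E t * (ktilde k mu zeta a * B (t - a)))"
    unfolding birth by (rule integral_cong) (simp add: x_eq ktilde_eq_survival mult_ac)
  finally show ?thesis using E by simp
qed

lemma renewal_rescaled:
  fixes k B :: "real \<Rightarrow> real"
  assumes k: "k absolutely_integrable_on {0..A}" and k1: "integral {0..A} k = 1"
    and B: "continuous_on UNIV B" and renewal: "B t = integral {0..A} (\<lambda>a. k a * B (t - a))"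
  shows "((\<lambda>a. k a * (B (t - a) / r - 1)) has_integral B t / r - 1) {0..A}"
proof -
  have "(\<lambda>a. k a * B (t - a)) integrable_on {0..A}"
    by (intro integrable_mult_continuous[OF k] continuous_on_compose2[OF B]) (auto intro!: continuous_intros)
  moreover have "k integrable_on {0..A}" using k by (simp add: absolutely_integrable_on_def)
  ultimately have "((\<lambda>a. k a * B (t - a) / r - k a) has_integral B t / r - 1) {0..A}"
    using renewal k1 by (intro has_integral_diff has_integral_divide) (auto simp: has_integral_integral)
  then show ?thesis by (simp add: right_diff_distrib)
qed

text \<open>The paper's representation \<open>x(a,t) = x\<^sup>*(a) e\<^sup>\<eta>\<^sup>(\<^sup>t\<^sup>) (1 + \<psi>(t - a))\<close> with
  \<open>\<eta>(t) = ln \<Pi>[x(\<cdot>,t)]\<close>, for a population whose mortality \<open>\<mu>(a)\<close> is raised by \<open>u(t) + G(t)\<close>.\<close>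
definition age_profile_decomposition ::
  "real \<Rightarrow> (real \<Rightarrow> real) \<Rightarrow> (real \<Rightarrow> real) \<Rightarrow> real \<Rightarrow> real \<Rightarrow> (real \<Rightarrow> real) \<Rightarrow> (real \<Rightarrow> real)
    \<Rightarrow> (real \<Rightarrow> real \<Rightarrow> real) \<Rightarrow> (real \<Rightarrow> real) \<Rightarrow> bool" where
  "age_profile_decomposition A k mu zeta c u G x psi \<longleftrightarrow>
    (\<forall>s. psi s > -1) \<and>
    (\<forall>t\<ge>0. PiF A k mu zeta c (\<lambda>a. x a t) > 0) \<and>
    (\<forall>t\<ge>0. \<forall>a\<in>{0..A}.
      psi (t - a) = x a t / (xstar mu zeta c a * PiF A k mu zeta c (\<lambda>a. x a t)) - 1) \<and>
    (\<forall>t\<ge>0. ((\<lambda>t. ln (PiF A k mu zeta c (\<lambda>a. x a t))) has_real_derivative zeta - u t - G t)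
      (at t within {0..})) \<and>
    (\<forall>t\<ge>0. ((\<lambda>a. ktilde k mu zeta a * psi (t - a)) has_integral psi t) {0..A})"

lemma age_profile_decompositionD:
  assumes "age_profile_decomposition A k mu zeta c u G x psi"
  shows "\<And>s. psi s > -1"
    and "\<And>t. 0 \<le> t \<Longrightarrow> PiF A k mu zeta c (\<lambda>a. x a t) > 0"
    and "\<And>t a. 0 \<le> t \<Longrightarrow> a \<in> {0..A} \<Longrightarrow>
      psi (t - a) = x a t / (xstar mu zeta c a * PiF A k mu zeta c (\<lambda>a. x a t)) - 1"
    and "\<And>t. 0 \<le> t \<Longrightarrow>
      ((\<lambda>t. ln (PiF A k mu zeta c (\<lambda>a. x a t))) has_real_derivative zeta - u t - G t) (at t within {0..})"
    and "\<And>t. 0 \<le> t \<Longrightarrow> ((\<lambda>a. ktilde k mu zeta a * psi (t - a)) has_integral psi t) {0..A}"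
  using assms unfolding age_profile_decomposition_def by auto

lemma population_decomposition:
  fixes mu k u G :: "real \<Rightarrow> real" and x :: "real \<Rightarrow> real \<Rightarrow> real"
  assumes A: "0 < A" and mu: "pc_on 0 A mu" and k: "pc_on 0 A k"
    and k_nonneg: "\<And>a. a \<in> {0..A} \<Longrightarrow> k a \<ge> 0"
    and k1: "integral {0..A} (ktilde k mu zeta) = 1" and c: "c > 0"
    and u: "continuous_on {0..} u" and G: "continuous_on {0..} G"
    and x_cont: "continuous_on ({0..A} \<times> {0..}) (\<lambda>(a, t). x a t)"
    and x_pos: "\<And>a t. a \<in> {0..A} \<Longrightarrow> 0 \<le> t \<Longrightarrow> x a t > 0"
    and birth: "\<And>t. 0 \<le> t \<Longrightarrow> x 0 t = integral {0..A} (\<lambda>a. k a * x a t)"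
    and char: "\<And>a t h. 0 \<le> a \<Longrightarrow> 0 \<le> t \<Longrightarrow> 0 \<le> h \<Longrightarrow> a + h \<le> A \<Longrightarrow>
        x (a + h) (t + h) = x a t * exp (- integral {0..h} (\<lambda>s. mu (a + s) + u (t + s) + G (t + s)))"
  shows "\<exists>psi. age_profile_decomposition A k mu zeta c u G x psi"
proof -
  define w where "w t = u t + G t" for t
  define E where "E t = exp (zeta * t - integral {0..t} w)" for t
  have mu_int: "mu integrable_on {0..A}"
    using pc_on_absolutely_integrable[OF mu] by (simp add: absolutely_integrable_on_def)
  have w: "continuous_on {0..} w" unfolding w_def by (intro continuous_intros u G)
  obtain B where B: "continuous_on UNIV B" and B_pos: "\<And>s. B s > 0"
    and x_eq: "\<And>a t. a \<in> {0..A} \<Longrightarrow> 0 \<le> t \<Longrightarrow> x a t = B (t - a) * survival mu zeta a * E t"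
    using transport_solution_cohort_form[OF less_imp_le[OF A] mu_int w x_cont x_pos, of zeta] char
    unfolding E_def w_def by (auto simp: add.assoc)
  have renewal: "B t = integral {0..A} (\<lambda>a. ktilde k mu zeta a * B (t - a))" if t: "0 \<le> t" for t
    using cohort_birth_renewal[of A t E x B mu zeta k, OF less_imp_le[OF A] t _ x_eq[OF _ t] birth[OF t]]
    by (simp add: E_def)
  obtain Pi0 where Pi0: "Pi0 > 0"
    and Pi0_eq: "\<And>t. 0 \<le> t \<Longrightarrow> PiF A k mu zeta c (\<lambda>a. survival mu zeta a * B (t - a)) = Pi0"
    using PiF_renewal_invariant[OF A mu_int k k_nonneg k1 c B B_pos renewal] by blast
  have Pi: "PiF A k mu zeta c (\<lambda>a. x a t) = E t * Pi0" if t: "0 \<le> t" for t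
  proof -
    have "PiF A k mu zeta c (\<lambda>a. x a t) = PiF A k mu zeta c (\<lambda>a. E t * (survival mu zeta a * B (t - a)))"
      by (rule PiF_cong) (simp add: x_eq t)
    then show ?thesis by (simp only: PiF_scale Pi0_eq[OF t])
  qed
  define psi where "psi s = B s / (c * Pi0) - 1" for s
  have "age_profile_decomposition A k mu zeta c u G x psi"
    unfolding age_profile_decomposition_def
  proof (intro conjI allI impI ballI)
    show "psi s > -1" for s
      using B_pos[of s] c Pi0 by (simp add: psi_def)
    show "PiF A k mu zeta c (\<lambda>a. x a t) > 0" if "0 \<le> t" for t
      using that Pi0 by (simp add: Pi E_def)
    show "psi (t - a) = x a t / (xstar mu zeta c a * PiF A k mu zeta c (\<lambda>a. x a t)) - 1"
      if "0 \<le> t" "a \<in> {0..A}" for t a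
      using that c Pi0 survival_pos[of mu zeta a]
      by (simp add: Pi x_eq psi_def xstar_eq_survival E_def)
    show "((\<lambda>t. ln (PiF A k mu zeta c (\<lambda>a. x a t))) has_real_derivative zeta - u t - G t)
        (at t within {0..})" if "0 \<le> t" for t
      using has_real_derivative_ln_exp_integral[OF w Pi0 Pi[unfolded E_def] that] by (simp add: w_def diff_diff_eq)
    show "((\<lambda>a. ktilde k mu zeta a * psi (t - a)) has_integral psi t) {0..A}" if "0 \<le> t" for t
      using renewal_rescaled[OF absolutely_integrable_ktilde[OF k mu_int] k1 B renewal[OF that]]
      by (simp add: psi_def)
  qed
  then show ?thesis by blast
qed

lemma age_profile_decomposition_eq:
  assumes "age_profile_decomposition A k mu zeta c u G x psi" and "c > 0" "0 \<le> t" "a \<in> {0..A}"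
  shows "x a t = xstar mu zeta c a * exp (ln (PiF A k mu zeta c (\<lambda>a. x a t))) * (1 + psi (t - a))"
proof -
  have "PiF A k mu zeta c (\<lambda>a. x a t) > 0"
    "psi (t - a) = x a t / (xstar mu zeta c a * PiF A k mu zeta c (\<lambda>a. x a t)) - 1"
    using assms unfolding age_profile_decomposition_def by auto
  moreover have "xstar mu zeta c a \<noteq> 0" using xstar_pos[OF assms(2), of mu zeta a] by simp
  ultimately show ?thesis by simp
qed

lemma integral_mult_decomposed_profile:
  fixes g :: "real \<Rightarrow> real"
  assumes "age_profile_decomposition A k mu zeta c u G x psi" and "c > 0" "0 \<le> t"
  shows "integral {0..A} (\<lambda>a. g a * x a t) = exp (ln (PiF A k mu zeta c (\<lambda>a. x a t))) *
    integral {0..A} (\<lambda>a. g a * xstar mu zeta c a * (1 + psi (t - a)))"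
proof -
  have "integral {0..A} (\<lambda>a. g a * x a t) = integral {0..A} (\<lambda>a. exp (ln (PiF A k mu zeta c (\<lambda>a. x a t))) *
      (g a * xstar mu zeta c a * (1 + psi (t - a))))"
    by (rule integral_cong, subst age_profile_decomposition_eq[OF assms]) (simp_all add: mult_ac)
  then show ?thesis by simp
qed

section \<open>The predator-prey system\<close>

theorem proposition2:
  fixes A :: real
    and mu1 mu2 k1 k2 g1 g2 :: "real \<Rightarrow> real"
    and zeta1 zeta2 c1 c2 :: real
    and u :: "real \<Rightarrow> real"
    and x1 x2 :: "real \<Rightarrow> real \<Rightarrow> real"
    and x10 x20 :: "real \<Rightarrow> real"
  assumes A_pos: "A > 0"
    and pc: "pc_on 0 A mu1" "pc_on 0 A mu2" "pc_on 0 A k1" "pc_on 0 A k2"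
            "pc_on 0 A g1" "pc_on 0 A g2"
    and nonneg: "\<forall>a\<in>{0..A}. mu1 a \<ge> 0 \<and> mu2 a \<ge> 0 \<and> k1 a \<ge> 0 \<and> k2 a \<ge> 0
                              \<and> g1 a \<ge> 0 \<and> g2 a \<ge> 0"
    and int_pos: "integral {0..A} mu1 > 0" "integral {0..A} mu2 > 0"
                 "integral {0..A} k1 > 0" "integral {0..A} k2 > 0"
                 "integral {0..A} g1 > 0" "integral {0..A} g2 > 0"
    and zeta1: "integral {0..A} (\<lambda>a. k1 a * exp (- integral {0..a} (\<lambda>s. mu1 s + zeta1))) = 1"
    and zeta2: "integral {0..A} (\<lambda>a. k2 a * exp (- integral {0..a} (\<lambda>s. mu2 s + zeta2))) = 1"
    and c_pos: "c1 > 0" "c2 > 0"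
    and u_cont: "continuous_on {0..} u"
    \<comment> \<open>notion of solution\<close>
    and x_cont: "continuous_on ({0..A} \<times> {0..}) (\<lambda>(a, t). x1 a t)"
                "continuous_on ({0..A} \<times> {0..}) (\<lambda>(a, t). x2 a t)"
    and x_F: "\<forall>t\<ge>0. (\<lambda>a. x1 a t) \<in> Fset A k1 \<and> (\<lambda>a. x2 a t) \<in> Fset A k2"
    and x_init: "x10 \<in> Fset A k1" "x20 \<in> Fset A k2"
                "\<forall>a\<in>{0..A}. x1 a 0 = x10 a \<and> x2 a 0 = x20 a"
    and x_bc: "\<forall>t\<ge>0. x1 0 t = integral {0..A} (\<lambda>a. k1 a * x1 a t)
                    \<and> x2 0 t = integral {0..A} (\<lambda>a. k2 a * x2 a t)"
    and x1_char: "\<forall>a t h. 0 \<le> a \<longrightarrow> 0 \<le> t \<longrightarrow> 0 \<le> h \<longrightarrow> a + h \<le> A \<longrightarrow>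
        x1 (a + h) (t + h) = x1 a t * exp (- integral {0..h} (\<lambda>s.
            mu1 (a + s) + u (t + s) + integral {0..A} (\<lambda>\<alpha>. g1 \<alpha> * x2 \<alpha> (t + s))))"
    and x2_char: "\<forall>a t h. 0 \<le> a \<longrightarrow> 0 \<le> t \<longrightarrow> 0 \<le> h \<longrightarrow> a + h \<le> A \<longrightarrow>
        x2 (a + h) (t + h) = x2 a t * exp (- integral {0..h} (\<lambda>s.
            mu2 (a + s) + u (t + s) + 1 / integral {0..A} (\<lambda>\<alpha>. g2 \<alpha> * x1 \<alpha> (t + s))))"
  shows "\<exists>psi1 psi2 :: real \<Rightarrow> real.
    let eta1 = (\<lambda>t. ln (PiF A k1 mu1 zeta1 c1 (\<lambda>a. x1 a t)));
        eta2 = (\<lambda>t. ln (PiF A k2 mu2 zeta2 c2 (\<lambda>a. x2 a t))) in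
    (\<forall>s\<ge>-A. psi1 s > -1 \<and> psi2 s > -1) \<and>
    (\<forall>t\<ge>0. \<forall>a\<in>{0..A}.
        psi1 (t - a) = x1 a t / (xstar mu1 zeta1 c1 a * PiF A k1 mu1 zeta1 c1 (\<lambda>a. x1 a t)) - 1 \<and>
        psi2 (t - a) = x2 a t / (xstar mu2 zeta2 c2 a * PiF A k2 mu2 zeta2 c2 (\<lambda>a. x2 a t)) - 1) \<and>
    (\<forall>t\<ge>0. \<forall>a\<in>{0..A}.
        x1 a t = xstar mu1 zeta1 c1 a * exp (eta1 t) * (1 + psi1 (t - a)) \<and>
        x2 a t = xstar mu2 zeta2 c2 a * exp (eta2 t) * (1 + psi2 (t - a))) \<and>
    (\<forall>t\<ge>0. (eta1 has_real_derivative
        (zeta1 - u t - exp (eta2 t) *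
          integral {0..A} (\<lambda>a. g1 a * xstar mu2 zeta2 c2 a * (1 + psi2 (t - a)))))
        (at t within {0..})) \<and>
    (\<forall>t\<ge>0. (eta2 has_real_derivative
        (zeta2 - u t - exp (- eta1 t) /
          integral {0..A} (\<lambda>a. g2 a * xstar mu1 zeta1 c1 a * (1 + psi1 (t - a)))))
        (at t within {0..})) \<and>
    (\<forall>t\<ge>0. ((\<lambda>a. ktilde k1 mu1 zeta1 a * psi1 (t - a)) has_integral psi1 t) {0..A} \<and>
            ((\<lambda>a. ktilde k2 mu2 zeta2 a * psi2 (t - a)) has_integral psi2 t) {0..A}) \<and>
    eta1 0 = ln (PiF A k1 mu1 zeta1 c1 x10) \<and> eta2 0 = ln (PiF A k2 mu2 zeta2 c2 x20) \<and>
    (\<forall>a\<in>{0..A}.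
        psi1 (- a) = x10 a / (xstar mu1 zeta1 c1 a * PiF A k1 mu1 zeta1 c1 x10) - 1 \<and>
        psi2 (- a) = x20 a / (xstar mu2 zeta2 c2 a * PiF A k2 mu2 zeta2 c2 x20) - 1)"
proof -
  have x_pos: "\<And>a t. a \<in> {0..A} \<Longrightarrow> 0 \<le> t \<Longrightarrow> x1 a t > 0"
    "\<And>a t. a \<in> {0..A} \<Longrightarrow> 0 \<le> t \<Longrightarrow> x2 a t > 0"
    using x_F by (auto simp: Fset_def)
  have k_nonneg: "\<And>a. a \<in> {0..A} \<Longrightarrow> k1 a \<ge> 0" "\<And>a. a \<in> {0..A} \<Longrightarrow> k2 a \<ge> 0"
    using nonneg by auto
  have k_norm: "integral {0..A} (ktilde k1 mu1 zeta1) = 1" "integral {0..A} (ktilde k2 mu2 zeta2) = 1"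
    using zeta1 zeta2 by (simp_all add: ktilde_def[abs_def])
  have birth: "\<And>t. 0 \<le> t \<Longrightarrow> x1 0 t = integral {0..A} (\<lambda>a. k1 a * x1 a t)"
    "\<And>t. 0 \<le> t \<Longrightarrow> x2 0 t = integral {0..A} (\<lambda>a. k2 a * x2 a t)"
    using x_bc by auto
  define G1 where "G1 t = integral {0..A} (\<lambda>\<alpha>. g1 \<alpha> * x2 \<alpha> t)" for t
  define I2 where "I2 t = integral {0..A} (\<lambda>\<alpha>. g2 \<alpha> * x1 \<alpha> t)" for t
  have I2_pos: "I2 t > 0" if "0 \<le> t" for t
    unfolding I2_def using that nonneg int_pos(6) x_pos
    by (intro integral_mult_continuous_pos pc_on_absolutely_integrable[OF pc(6)]
        continuous_on_slice[OF x_cont(1)]) auto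
  have G_cont: "continuous_on {0..} G1" "continuous_on {0..} (\<lambda>t. 1 / I2 t)"
    unfolding G1_def I2_def using I2_pos[unfolded I2_def]
    by (auto intro!: continuous_intros continuous_on_parametric_integral x_cont
        pc_on_absolutely_integrable pc simp: less_imp_neq[symmetric])
  obtain psi1 where psi1: "age_profile_decomposition A k1 mu1 zeta1 c1 u G1 x1 psi1"
    using population_decomposition[OF A_pos pc(1) pc(3) k_nonneg(1) k_norm(1) c_pos(1) u_cont G_cont(1)
        x_cont(1) x_pos(1) birth(1)] x1_char
    unfolding G1_def by blast
  obtain psi2 where psi2: "age_profile_decomposition A k2 mu2 zeta2 c2 u (\<lambda>t. 1 / I2 t) x2 psi2"
    using population_decomposition[OF A_pos pc(2) pc(4) k_nonneg(2) k_norm(2) c_pos(2) u_cont G_cont(2)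
        x_cont(2) x_pos(2) birth(2)] x2_char
    unfolding I2_def by blast
  have G1_eq: "G1 t = exp (ln (PiF A k2 mu2 zeta2 c2 (\<lambda>a. x2 a t))) *
      integral {0..A} (\<lambda>a. g1 a * xstar mu2 zeta2 c2 a * (1 + psi2 (t - a)))" if "0 \<le> t" for t
    unfolding G1_def by (rule integral_mult_decomposed_profile[OF psi2 c_pos(2) that])
  have I2_eq: "1 / I2 t = exp (- ln (PiF A k1 mu1 zeta1 c1 (\<lambda>a. x1 a t))) /
      integral {0..A} (\<lambda>a. g2 a * xstar mu1 zeta1 c1 a * (1 + psi1 (t - a)))" if "0 \<le> t" for t
    unfolding I2_def integral_mult_decomposed_profile[OF psi1 c_pos(1) that]
    by (simp add: exp_minus divide_inverse mult.commute)
  have init: "PiF A k1 mu1 zeta1 c1 (\<lambda>a. x1 a 0) = PiF A k1 mu1 zeta1 c1 x10"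
    "PiF A k2 mu2 zeta2 c2 (\<lambda>a. x2 a 0) = PiF A k2 mu2 zeta2 c2 x20"
    using x_init(3) by (auto intro: PiF_cong)
  note d1 = age_profile_decompositionD[OF psi1] and d2 = age_profile_decompositionD[OF psi2]
  show ?thesis
    unfolding Let_def
    apply (rule exI[of _ psi1], rule exI[of _ psi2], intro conjI)
    subgoal using d1(1) d2(1) by simp
    subgoal using d1(3) d2(3) by simp
    subgoal by (intro allI impI ballI conjI age_profile_decomposition_eq[OF psi1 c_pos(1)]
        age_profile_decomposition_eq[OF psi2 c_pos(2)]) auto
    subgoal using d1(4) G1_eq by simp
    subgoal using d2(4) I2_eq by simp
    subgoal using d1(5) d2(5) by simp
    subgoal using init by simp
    subgoal using init by simp
    subgoal using d1(3)[of 0] d2(3)[of 0] init x_init(3) by simp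
    done
qed

end
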